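(* Consider the primal SDP $\tau=\inf\{\sum_{j\in[p]}\langle\mathbf{C}_j,\mathbf{X}_j\rangle:\ \mathbf{X}_j\in\mathcal{S}_j^+\ (j\in[p]),\ \sum_{j\in[p]}\mathcal{A}_j\mathbf{X}_j=\mathbf{b}\}$ and its dual $\rho=\sup\{\mathbf{b}^\top\mathbf{y}:\ \mathbf{y}\in\mathbb{R}^\zeta,\ \mathbf{C}_j-\mathcal{A}_j^\top\mathbf{y}\in\mathcal{S}_j^+\ (j\in[p])\}$. Assume (i) strong duality: $\rho=\tau\in\mathbb{R}$; and (ii) constant trace property: there exist $a_1,\dots,a_p>0$ such that whenever $\mathbf{X}_j\in\mathcal{S}_j$ ($j\in[p]$) satisfy $\sum_{j\in[p]}\mathcal{A}_j\mathbf{X}_j=\mathbf{b}$, then $\mathrm{trace}(\mathbf{X}_j)=a_j$ for all $j\in[p]$. Define $\psi:\mathbb{R}^\zeta\to\mathbb{R}$, $\psi(\mathbf{y}):=\mathbf{b}^\top\mathbf{y}+\sum_{j\in[p]}a_j\lambda_{\min}(\mathbf{C}_j-\mathcal{A}_j^\top\mathbf{y})$. Then $\tau=\sup_{\mathbf{y}\in\mathbb{R}^\zeta}\psi(\mathbf{y})$. Moreover, if the dual SDP has an optimal solution, then $\sup_{\mathbf{y}\in\mathbb{R}^\zeta}\psi(\mathbf{y})$ is attained.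
   Context: For $j\in[p]$, $\mathcal{S}_j$ is the space of real symmetric block-diagonal matrices $\mathrm{diag}(\mathbf{X}_{1,j},\dots,\mathbf{X}_{\omega_j,j})$ with fixed block sizes $s^{(1,j)},\dots,s^{(\omega_j,j)}\ge1$, with inner product $\langle\mathbf{A},\mathbf{B}\rangle=\mathrm{trace}(\mathbf{B}^\top\mathbf{A})$, and $\mathcal{S}_j^+$ is the set of positive semidefinite elements of $\mathcal{S}_j$. Given $\mathbf{C}_j\in\mathcal{S}_j$, $\mathbf{A}_{i,j}\in\mathcal{S}_j$ ($i\in[\zeta]$) and $\mathbf{b}\in\mathbb{R}^\zeta$: $\mathcal{A}_j\mathbf{X}:=(\langle\mathbf{A}_{1,j},\mathbf{X}\rangle,\dots,\langle\mathbf{A}_{\zeta,j},\mathbf{X}\rangle)$ and its adjoint $\mathcal{A}_j^\top\mathbf{z}:=\sum_{i\in[\zeta]}z_i\mathbf{A}_{i,j}$. $\lambda_{\min}$ denotes the smallest eigenvalue of a real symmetric matrix. *)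

theory Defs
  imports "Jordan_Normal_Form.Char_Poly" "HOL-Library.Extended_Real"
begin

definition blk_start :: "nat list \<Rightarrow> nat \<Rightarrow> nat" where
  "blk_start bs k = sum_list (take k bs)"

definition same_block :: "nat list \<Rightarrow> nat \<Rightarrow> nat \<Rightarrow> bool" where
  "same_block bs r c = (\<exists>k<length bs. blk_start bs k \<le> r \<and> r < blk_start bs (Suc k)
                                    \<and> blk_start bs k \<le> c \<and> c < blk_start bs (Suc k))"

definition bdsym :: "nat list \<Rightarrow> real mat set" where
  "bdsym bs = {X \<in> carrier_mat (sum_list bs) (sum_list bs).
      transpose_mat X = X \<and>
      (\<forall>r<sum_list bs. \<forall>c<sum_list bs. \<not> same_block bs r c \<longrightarrow> X $$ (r, c) = 0)}"

definition psd_mat :: "real mat \<Rightarrow> bool" where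
  "psd_mat X = (\<forall>v \<in> carrier_vec (dim_row X). v \<bullet> (X *\<^sub>v v) \<ge> 0)"

definition bdpsd :: "nat list \<Rightarrow> real mat set" where
  "bdpsd bs = {X \<in> bdsym bs. psd_mat X}"

definition mtrace :: "real mat \<Rightarrow> real" where
  "mtrace X = (\<Sum>i<dim_row X. X $$ (i, i))"

definition minner :: "real mat \<Rightarrow> real mat \<Rightarrow> real" where
  "minner A B = mtrace (transpose_mat B * A)"

(* adjoint A_j^T z = sum_i z_i A_{i,j}, with Aj i = A_{i,j} of size n x n *)
definition adjA :: "nat \<Rightarrow> nat \<Rightarrow> (nat \<Rightarrow> real mat) \<Rightarrow> real vec \<Rightarrow> real mat" where
  "adjA \<zeta> n Aj z = mat n n (\<lambda>(r, c). \<Sum>i<\<zeta>. z $ i * Aj i $$ (r, c))"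

definition lambda_min :: "real mat \<Rightarrow> real" where
  "lambda_min M = Min {k. eigenvalue M k}"

end

theory Submission
  imports Defs "HOL-Analysis.Function_Topology"
begin

(* For a primal feasible X the constant trace property gives trace X_j = a_j, and
   <M, X> >= lambda_min M * trace X for every psd X.  With M = C_j - A_j^T y this yields
   psi y <= sum_j <C_j, X_j> for every y (weak duality for psi).  If y is dual feasible the
   slacks are psd, so their smallest eigenvalues are nonnegative and b^T y <= psi y.  Thus
   rho <= sup psi <= tau, strong duality closes the sandwich, and a dual optimal y maximises psi.

   No spectral theorem is used.  lambda_min M is the minimum of the Rayleigh quotient: the
   minimum over the unit sphere is attained by compactness and the minimiser is an eigenvector
   by a first-order argument.  trace (P X) >= 0 for psd P and X follows by peeling rank-one psd
   terms off X with Schur complements.  For these arguments matrices are represented by their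
   entry functions nat => nat => real, so that the unit sphere lives in the product topology. *)

definition bilin_form :: "nat \<Rightarrow> (nat \<Rightarrow> nat \<Rightarrow> real) \<Rightarrow> (nat \<Rightarrow> real) \<Rightarrow> (nat \<Rightarrow> real) \<Rightarrow> real" where
  "bilin_form n F x y = (\<Sum>i<n. \<Sum>k<n. x i * F i k * y k)"

definition psd_form :: "nat \<Rightarrow> (nat \<Rightarrow> nat \<Rightarrow> real) \<Rightarrow> bool" where
  "psd_form n F \<longleftrightarrow> (\<forall>z. 0 \<le> bilin_form n F z z)"

definition sym_form :: "nat \<Rightarrow> (nat \<Rightarrow> nat \<Rightarrow> real) \<Rightarrow> bool" where
  "sym_form n F \<longleftrightarrow> (\<forall>i<n. \<forall>k<n. F i k = F k i)"

definition sq_norm :: "nat \<Rightarrow> (nat \<Rightarrow> real) \<Rightarrow> real" where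
  "sq_norm n f = (\<Sum>i<n. (f i)\<^sup>2)"

lemma bilin_form_add_left:
  "bilin_form n F (\<lambda>i. x i + x' i) y = bilin_form n F x y + bilin_form n F x' y"
  unfolding bilin_form_def by (simp add: algebra_simps sum.distrib)

lemma bilin_form_add_right:
  "bilin_form n F x (\<lambda>i. y i + y' i) = bilin_form n F x y + bilin_form n F x y'"
  unfolding bilin_form_def by (simp add: algebra_simps sum.distrib)

lemma bilin_form_scale_left: "bilin_form n F (\<lambda>i. t * x i) y = t * bilin_form n F x y"
  unfolding bilin_form_def by (simp add: algebra_simps sum_distrib_left)

lemma bilin_form_scale_right: "bilin_form n F x (\<lambda>i. t * y i) = t * bilin_form n F x y"
  unfolding bilin_form_def by (simp add: algebra_simps sum_distrib_left)

lemma bilin_form_square_expand: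
  "bilin_form n F (\<lambda>i. x i + t * y i) (\<lambda>i. x i + t * y i)
     = bilin_form n F x x + t * (bilin_form n F x y + bilin_form n F y x) + t\<^sup>2 * bilin_form n F y y"
  by (simp add: bilin_form_add_left bilin_form_add_right bilin_form_scale_left
      bilin_form_scale_right algebra_simps power2_eq_square)

lemma bilin_form_cong:
  "(\<And>i. i < n \<Longrightarrow> x i = x' i) \<Longrightarrow> (\<And>i. i < n \<Longrightarrow> y i = y' i)
     \<Longrightarrow> bilin_form n F x y = bilin_form n F x' y'"
  unfolding bilin_form_def by (intro sum.cong refl) auto

lemma bilin_form_commute: "sym_form n F \<Longrightarrow> bilin_form n F x y = bilin_form n F y x"
  unfolding bilin_form_def sym_form_def
  by (subst sum.swap) (intro sum.cong refl, simp add: ac_simps)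

lemma bilin_form_eq_sum_row: "bilin_form n F x y = (\<Sum>i<n. x i * (\<Sum>k<n. F i k * y k))"
  unfolding bilin_form_def by (simp add: sum_distrib_left mult.assoc)

lemma bilin_form_basis_right:
  assumes "k < n"
  shows "bilin_form n F x (\<lambda>j. of_bool (j = k)) = (\<Sum>i<n. x i * F i k)"
  unfolding bilin_form_def using assms
  by (simp add: of_bool_def if_distrib[of "\<lambda>t. _ * t"] sum.delta' cong: if_cong)

lemma bilin_form_basis_diag:
  assumes "k < n"
  shows "bilin_form n F (\<lambda>i. of_bool (i = k)) (\<lambda>i. of_bool (i = k)) = F k k"
  using bilin_form_basis_right[OF assms, of F "\<lambda>i. of_bool (i = k)"] assms
  by (simp add: of_bool_def if_distrib[of "\<lambda>t. t * _"] cong: if_cong)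

lemma psd_form_diag_nonneg: "psd_form n F \<Longrightarrow> k < n \<Longrightarrow> 0 \<le> F k k"
  using bilin_form_basis_diag unfolding psd_form_def by metis

lemma bilin_form_shift_diag:
  "bilin_form n (\<lambda>i k. F i k - \<mu> * of_bool (i = k)) x y
     = bilin_form n F x y - \<mu> * (\<Sum>i<n. x i * y i)"
  unfolding bilin_form_def
  by (simp add: algebra_simps sum_subtractf sum_distrib_left of_bool_def
      if_distrib[of "\<lambda>t. _ * t"] sum.delta cong: if_cong)

lemma sq_norm_eq_0_iff: "sq_norm n f = 0 \<longleftrightarrow> (\<forall>i<n. f i = 0)"
  unfolding sq_norm_def by (auto simp: sum_nonneg_eq_0_iff)

lemma sq_norm_pos_iff: "0 < sq_norm n f \<longleftrightarrow> (\<exists>i<n. f i \<noteq> 0)"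
  using sq_norm_eq_0_iff[of n f] sum_nonneg[of "{..<n}" "\<lambda>i. (f i)\<^sup>2"]
  unfolding sq_norm_def by force

lemma quadratic_nonneg_imp_linear_zero:
  fixes b c :: real
  assumes "0 \<le> c" and nonneg: "\<And>t. 0 \<le> t * b + t\<^sup>2 * c"
  shows "b = 0"
proof -
  define t where "t = - b / (c + 1)"
  have t: "t * (c + 1) = - b"
    using \<open>0 \<le> c\<close> unfolding t_def by simp
  have "(c + 1)\<^sup>2 * (t * b + t\<^sup>2 * c) = (t * (c + 1)) * b * (c + 1) + (t * (c + 1))\<^sup>2 * c"
    by (simp add: algebra_simps power2_eq_square)
  also have "\<dots> = - b\<^sup>2"
    unfolding t by (simp add: algebra_simps power2_eq_square)
  finally have "0 \<le> - b\<^sup>2"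
    using nonneg[of t] by (metis zero_le_power2 mult_nonneg_nonneg)
  then show "b = 0" by simp
qed

lemma psd_form_isotropic_kernel:
  assumes psd: "psd_form n F" and sym: "sym_form n F"
    and iso: "bilin_form n F x x = 0" and "i < n"
  shows "(\<Sum>k<n. F i k * x k) = 0"
proof -
  let ?e = "\<lambda>k. of_bool (k = i) :: real"
  have row: "bilin_form n F x ?e = (\<Sum>k<n. F i k * x k)"
    using bilin_form_basis_right[OF \<open>i < n\<close>] sym \<open>i < n\<close> unfolding sym_form_def
    by (auto intro!: sum.cong simp: mult.commute)
  have "0 \<le> t * (2 * bilin_form n F x ?e) + t\<^sup>2 * bilin_form n F ?e ?e" for t
  proof -
    have "0 \<le> bilin_form n F (\<lambda>k. x k + t * ?e k) (\<lambda>k. x k + t * ?e k)"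
      using psd unfolding psd_form_def by blast
    also have "\<dots> = t * (2 * bilin_form n F x ?e) + t\<^sup>2 * bilin_form n F ?e ?e"
      unfolding bilin_form_square_expand bilin_form_commute[OF sym, of ?e x] iso by simp
    finally show ?thesis .
  qed
  moreover have "0 \<le> bilin_form n F ?e ?e"
    using psd unfolding psd_form_def by blast
  ultimately show ?thesis
    using quadratic_nonneg_imp_linear_zero row by fastforce
qed

definition trace_prod :: "nat \<Rightarrow> (nat \<Rightarrow> nat \<Rightarrow> real) \<Rightarrow> (nat \<Rightarrow> nat \<Rightarrow> real) \<Rightarrow> real" where
  "trace_prod n P X = (\<Sum>i<n. \<Sum>j<n. P i j * X j i)"

definition schur_compl :: "(nat \<Rightarrow> nat \<Rightarrow> real) \<Rightarrow> nat \<Rightarrow> nat \<Rightarrow> nat \<Rightarrow> real" where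
  "schur_compl X k i j = X i j - X i k * X k j / X k k"

lemma sym_form_schur_compl: "sym_form n X \<Longrightarrow> k < n \<Longrightarrow> sym_form n (schur_compl X k)"
  unfolding sym_form_def schur_compl_def by (simp add: mult.commute)

lemma bilin_form_schur_compl:
  assumes "sym_form n X" and "k < n"
  shows "bilin_form n (schur_compl X k) z z
           = bilin_form n X z z - (\<Sum>i<n. z i * X i k)\<^sup>2 / X k k"
proof -
  have "bilin_form n (schur_compl X k) z z
      = bilin_form n X z z - (\<Sum>i<n. \<Sum>j<n. (z i * X i k) * (X k j * z j)) / X k k"
    unfolding bilin_form_def schur_compl_def
    by (simp add: algebra_simps sum_subtractf sum_divide_distrib)
  also have "(\<Sum>i<n. \<Sum>j<n. (z i * X i k) * (X k j * z j))
      = (\<Sum>i<n. z i * X i k) * (\<Sum>j<n. X k j * z j)"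
    by (simp add: sum_product)
  also have "(\<Sum>j<n. X k j * z j) = (\<Sum>i<n. z i * X i k)"
    using assms unfolding sym_form_def by (intro sum.cong) (auto simp: mult.commute)
  finally show ?thesis by (simp add: power2_eq_square)
qed

lemma psd_form_schur_compl:
  assumes psd: "psd_form n X" and sym: "sym_form n X" and "k < n" and pivot: "0 < X k k"
  shows "psd_form n (schur_compl X k)"
  unfolding psd_form_def
proof
  fix z
  define s where "s = (\<Sum>i<n. z i * X i k)"
  let ?e = "\<lambda>i. of_bool (i = k) :: real"
  have ze: "bilin_form n X z ?e = s" and ez: "bilin_form n X ?e z = s"
    using bilin_form_basis_right[OF \<open>k < n\<close>] bilin_form_commute[OF sym] unfolding s_def by metis+
  have "0 \<le> bilin_form n X (\<lambda>i. z i + (- s / X k k) * ?e i) (\<lambda>i. z i + (- s / X k k) * ?e i)"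
    using psd unfolding psd_form_def by blast
  also have "\<dots> = bilin_form n X z z - s\<^sup>2 / X k k"
    unfolding bilin_form_square_expand ze ez bilin_form_basis_diag[OF \<open>k < n\<close>]
    using pivot by (simp add: field_simps power2_eq_square)
  also have "\<dots> = bilin_form n (schur_compl X k) z z"
    unfolding bilin_form_schur_compl[OF sym \<open>k < n\<close>] s_def ..
  finally show "0 \<le> bilin_form n (schur_compl X k) z z" .
qed

lemma trace_prod_schur_compl:
  assumes "sym_form n X" and "k < n"
  shows "trace_prod n P X
           = trace_prod n P (schur_compl X k) + bilin_form n P (\<lambda>i. X i k) (\<lambda>i. X i k) / X k k"
proof -
  have "trace_prod n P X
      = trace_prod n P (schur_compl X k) + (\<Sum>i<n. \<Sum>j<n. P i j * (X j k * X k i)) / X k k"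
    unfolding trace_prod_def schur_compl_def
    by (simp add: algebra_simps sum_subtractf sum_divide_distrib)
  also have "(\<Sum>i<n. \<Sum>j<n. P i j * (X j k * X k i)) = bilin_form n P (\<lambda>i. X i k) (\<lambda>i. X i k)"
    unfolding bilin_form_def using assms unfolding sym_form_def
    by (intro sum.cong refl) (auto simp: ac_simps)
  finally show ?thesis .
qed

lemma trace_prod_nonneg_rows_zero:
  assumes P: "psd_form n P"
  shows "sym_form n X \<Longrightarrow> psd_form n X \<Longrightarrow> \<forall>i<k. \<forall>j<n. X i j = 0 \<Longrightarrow> 0 \<le> trace_prod n P X"
proof (induction "n - k" arbitrary: k X)
  case 0
  then have "\<forall>i<n. \<forall>j<n. X i j = 0" by auto
  then show ?case unfolding trace_prod_def by simp
next
  case (Suc d)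
  note sym = Suc.prems(1) and psd = Suc.prems(2) and rows = Suc.prems(3)
  have "k < n" and d: "d = n - Suc k" using Suc.hyps(2) by auto
  show ?case
  proof (cases "X k k = 0")
    \<comment> \<open>A vanishing pivot forces row k to vanish; otherwise the Schur complement removes
      the rank-one psd part of X through row k, which contributes nonnegatively to the trace.\<close>
    case True
    have "X j k = 0" if "j < n" for j
      using psd_form_isotropic_kernel[OF psd sym _ \<open>j < n\<close>, of "\<lambda>i. of_bool (i = k)"] \<open>k < n\<close> True
      unfolding bilin_form_basis_diag[OF \<open>k < n\<close>]
      by (simp add: of_bool_def if_distrib[of "\<lambda>t. _ * t"] cong: if_cong)
    then have "\<forall>i<Suc k. \<forall>j<n. X i j = 0"
      using rows sym \<open>k < n\<close> unfolding sym_form_def by (metis less_Suc_eq)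
    then show ?thesis using Suc.hyps(1)[OF d sym psd] by blast
  next
    case False
    then have pivot: "0 < X k k" using psd_form_diag_nonneg[OF psd \<open>k < n\<close>] by simp
    have "\<forall>i<Suc k. \<forall>j<n. schur_compl X k i j = 0"
      using rows sym \<open>k < n\<close> pivot unfolding sym_form_def schur_compl_def by (auto simp: less_Suc_eq)
    then have "0 \<le> trace_prod n P (schur_compl X k)"
      using Suc.hyps(1)[OF d] sym_form_schur_compl[OF sym \<open>k < n\<close>]
        psd_form_schur_compl[OF psd sym \<open>k < n\<close> pivot] by blast
    moreover have "0 \<le> bilin_form n P (\<lambda>i. X i k) (\<lambda>i. X i k)"
      using P unfolding psd_form_def by blast
    ultimately show ?thesis
      unfolding trace_prod_schur_compl[OF sym \<open>k < n\<close>] using pivot by simp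
  qed
qed

lemma trace_prod_psd_nonneg:
  "psd_form n P \<Longrightarrow> sym_form n X \<Longrightarrow> psd_form n X \<Longrightarrow> 0 \<le> trace_prod n P X"
  using trace_prod_nonneg_rows_zero[of n P X 0] by simp

lemma continuous_on_coordinate [continuous_intros]:
  "continuous_on S (\<lambda>f. f i :: 'b::topological_space)"
  by (rule continuous_on_subset[OF continuous_on_product_coordinates]) simp

lemma compact_unit_sphere: "compact {f :: nat \<Rightarrow> real. (\<forall>i\<ge>n. f i = 0) \<and> sq_norm n f = 1}"
proof -
  define B where "B i = (if i < n then {-1..1} else {0 :: real})" for i
  have "compact (PiE UNIV B)"
    using compactin_PiE[of "\<lambda>i. euclidean" UNIV B]
    unfolding B_def euclidean_product_topology by auto
  moreover have "closed {f :: nat \<Rightarrow> real. sq_norm n f = 1}"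
    unfolding sq_norm_def by (intro closed_Collect_eq continuous_intros)
  moreover have "{f. (\<forall>i\<ge>n. f i = 0) \<and> sq_norm n f = 1} = PiE UNIV B \<inter> {f. sq_norm n f = 1}"
  proof -
    have "\<bar>f i\<bar> \<le> 1" if "sq_norm n f = 1" and "i < n" for f i
      using member_le_sum[of i "{..<n}" "\<lambda>i. (f i)\<^sup>2"] that
      unfolding sq_norm_def by (simp add: abs_square_le_1)
    moreover have "f i = 0" if "\<forall>i. f i \<in> B i" and "n \<le> i" for f :: "nat \<Rightarrow> real" and i
      using that(1)[rule_format, of i] that(2) unfolding B_def by simp
    ultimately show ?thesis unfolding B_def by (auto simp: PiE_iff abs_le_iff)
  qed
  ultimately show ?thesis by (simp add: compact_Int_closed)
qed

lemma rayleigh_min_exists: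
  assumes "0 < n"
  obtains f0 where "sq_norm n f0 = 1"
    and "\<And>f. bilin_form n F f0 f0 * sq_norm n f \<le> bilin_form n F f f"
proof -
  let ?S = "{f :: nat \<Rightarrow> real. (\<forall>i\<ge>n. f i = 0) \<and> sq_norm n f = 1}"
  have "(\<lambda>i. of_bool (i = 0)) \<in> ?S"
    using assms by (simp add: sq_norm_def of_bool_def if_distrib[of "\<lambda>t. t\<^sup>2"] cong: if_cong)
  then have "?S \<noteq> {}"
    by (metis empty_iff)
  moreover have "continuous_on ?S (\<lambda>f. bilin_form n F f f)"
    unfolding bilin_form_def by (intro continuous_intros)
  ultimately have "\<exists>f0\<in>?S. \<forall>g\<in>?S. bilin_form n F f0 f0 \<le> bilin_form n F g g"
    by (rule continuous_attains_inf[OF compact_unit_sphere])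
  then obtain f0 where f0: "f0 \<in> ?S" and min: "\<forall>g\<in>?S. bilin_form n F f0 f0 \<le> bilin_form n F g g"
    by blast
  have "bilin_form n F f0 f0 * sq_norm n f \<le> bilin_form n F f f" for f
  proof (cases "sq_norm n f = 0")
    case True
    then have "bilin_form n F f f = bilin_form n F (\<lambda>_. 0) (\<lambda>_. 0)"
      by (intro bilin_form_cong) (auto simp: sq_norm_eq_0_iff)
    then show ?thesis using True by (simp add: bilin_form_def)
  next
    case False
    then have s: "0 < sq_norm n f"
      using sq_norm_pos_iff sq_norm_eq_0_iff by blast
    define r where "r = 1 / sqrt (sq_norm n f)"
    define g where "g i = (if i < n then r * f i else 0)" for i
    have r2: "r\<^sup>2 * sq_norm n f = 1"
      using s unfolding r_def by (simp add: power_divide)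
    have "sq_norm n g = r\<^sup>2 * sq_norm n f"
      unfolding sq_norm_def g_def by (simp add: power_mult_distrib sum_distrib_left)
    then have "g \<in> ?S" using r2 unfolding g_def by simp
    then have "bilin_form n F f0 f0 \<le> bilin_form n F g g" using min by blast
    also have "bilin_form n F g g = r\<^sup>2 * bilin_form n F f f"
      using bilin_form_cong[of n g "\<lambda>i. r * f i" g "\<lambda>i. r * f i" F]
      unfolding bilin_form_scale_left bilin_form_scale_right g_def by (simp add: power2_eq_square)
    finally have "bilin_form n F f0 f0 * sq_norm n f \<le> r\<^sup>2 * bilin_form n F f f * sq_norm n f"
      using s by (simp add: mult_right_mono)
    also have "\<dots> = bilin_form n F f f * (r\<^sup>2 * sq_norm n f)"
      by (simp only: ac_simps)
    finally show ?thesis unfolding r2 by simp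
  qed
  with f0 that show thesis by blast
qed

lemma rayleigh_minimizer_eigenvector:
  assumes sym: "sym_form n F" and unit: "sq_norm n f0 = 1"
    and min: "\<And>f. bilin_form n F f0 f0 * sq_norm n f \<le> bilin_form n F f f" and "i < n"
  shows "(\<Sum>k<n. F i k * f0 k) = bilin_form n F f0 f0 * f0 i"
proof -
  define \<mu> where "\<mu> = bilin_form n F f0 f0"
  define N where "N = (\<lambda>i k. F i k - \<mu> * of_bool (i = k))"
  have N_form: "bilin_form n N f f = bilin_form n F f f - \<mu> * sq_norm n f" for f
    unfolding N_def bilin_form_shift_diag sq_norm_def by (simp add: power2_eq_square)
  have "psd_form n N"
    using min unfolding psd_form_def N_form \<mu>_def by simp
  moreover have "sym_form n N"
    using sym unfolding sym_form_def N_def by auto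
  moreover have "bilin_form n N f0 f0 = 0"
    unfolding N_form unit \<mu>_def by simp
  ultimately have "(\<Sum>k<n. N i k * f0 k) = 0"
    using psd_form_isotropic_kernel \<open>i < n\<close> by blast
  then show ?thesis
    using \<open>i < n\<close> unfolding N_def \<mu>_def
    by (simp add: left_diff_distrib sum_subtractf mult.assoc flip: sum_distrib_left)
qed

definition entries :: "real mat \<Rightarrow> nat \<Rightarrow> nat \<Rightarrow> real" where
  "entries M i k = M $$ (i, k)"

lemma index_mult_mat_vec_sum:
  assumes "M \<in> carrier_mat n n" and "v \<in> carrier_vec n" and "i < n"
  shows "(M *\<^sub>v v) $ i = (\<Sum>k<n. M $$ (i, k) * v $ k)"
  using assms by (simp add: scalar_prod_def atLeast0LessThan)

lemma scalar_prod_mult_mat_vec_eq_bilin_form: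
  assumes "M \<in> carrier_mat n n" and "v \<in> carrier_vec n"
  shows "v \<bullet> (M *\<^sub>v v) = bilin_form n (entries M) (($) v) (($) v)"
  unfolding bilin_form_eq_sum_row entries_def
  using assms index_mult_mat_vec_sum[OF assms] by (simp add: scalar_prod_def atLeast0LessThan)

lemma scalar_prod_self_eq_sq_norm: "v \<in> carrier_vec n \<Longrightarrow> v \<bullet> v = sq_norm n (($) v)"
  unfolding sq_norm_def by (simp add: scalar_prod_def atLeast0LessThan power2_eq_square)

lemma psd_mat_imp_psd_form:
  assumes "M \<in> carrier_mat n n" and "psd_mat M"
  shows "psd_form n (entries M)"
  unfolding psd_form_def
proof
  fix z
  have "0 \<le> vec n z \<bullet> (M *\<^sub>v vec n z)"
    using assms unfolding psd_mat_def by simp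
  also have "\<dots> = bilin_form n (entries M) z z"
    unfolding scalar_prod_mult_mat_vec_eq_bilin_form[OF assms(1) vec_carrier]
    by (intro bilin_form_cong) simp_all
  finally show "0 \<le> bilin_form n (entries M) z z" .
qed

lemma finite_eigenvalues:
  assumes "M \<in> carrier_mat n n"
  shows "finite {k :: real. eigenvalue M k}"
proof -
  have "char_poly M \<noteq> 0"
    using degree_monic_char_poly[OF assms] by auto
  then show ?thesis
    using poly_roots_finite eigenvalue_root_char_poly[OF assms] by simp
qed

lemma lambda_min_rayleigh:
  assumes M: "M \<in> carrier_mat n n" and "0 < n" and sym: "sym_form n (entries M)"
  obtains f0 where "sq_norm n f0 = 1" and "lambda_min M = bilin_form n (entries M) f0 f0"
    and "\<And>f. lambda_min M * sq_norm n f \<le> bilin_form n (entries M) f f"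
proof -
  obtain f0 where unit: "sq_norm n f0 = 1"
    and min: "\<And>f. bilin_form n (entries M) f0 f0 * sq_norm n f \<le> bilin_form n (entries M) f f"
    using rayleigh_min_exists[OF \<open>0 < n\<close>, where F = "entries M"] by blast
  define \<mu> where "\<mu> = bilin_form n (entries M) f0 f0"
  have "M *\<^sub>v vec n f0 = \<mu> \<cdot>\<^sub>v vec n f0"
  proof (rule eq_vecI)
    fix i
    assume "i < dim_vec (\<mu> \<cdot>\<^sub>v vec n f0)"
    then have "i < n" by simp
    then show "(M *\<^sub>v vec n f0) $ i = (\<mu> \<cdot>\<^sub>v vec n f0) $ i"
      using index_mult_mat_vec_sum[OF M vec_carrier \<open>i < n\<close>]
        rayleigh_minimizer_eigenvector[OF sym unit min \<open>i < n\<close>]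
      unfolding \<mu>_def entries_def by simp
  qed (use M in simp)
  moreover have "vec n f0 \<noteq> 0\<^sub>v n"
    using unit sq_norm_eq_0_iff[of n f0] by (metis index_vec index_zero_vec(1) zero_neq_one)
  ultimately have ev: "eigenvalue M \<mu>"
    using M unfolding eigenvalue_def eigenvector_def by (metis carrier_matD(1) vec_carrier)
  have "\<mu> \<le> k" if k: "eigenvalue M k" for k
  proof -
    obtain v where v: "v \<in> carrier_vec n" "v \<noteq> 0\<^sub>v n" "M *\<^sub>v v = k \<cdot>\<^sub>v v"
      using k M unfolding eigenvalue_def eigenvector_def by auto
    have "0 < sq_norm n (($) v)"
      using v(1,2) sq_norm_pos_iff by (metis eq_vecI carrier_vecD index_zero_vec)
    have "\<mu> * sq_norm n (($) v) \<le> bilin_form n (entries M) (($) v) (($) v)"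
      unfolding \<mu>_def by (rule min)
    also have "\<dots> = k * sq_norm n (($) v)"
      using v scalar_prod_mult_mat_vec_eq_bilin_form[OF M v(1)] scalar_prod_self_eq_sq_norm[OF v(1)]
      by simp
    finally show ?thesis
      using \<open>0 < sq_norm n (($) v)\<close> by simp
  qed
  then have "lambda_min M = \<mu>"
    unfolding lambda_min_def using finite_eigenvalues[OF M] ev by (intro Min_eqI) auto
  then show thesis
    using that unit min unfolding \<mu>_def by metis
qed

lemma minner_eq_sum:
  assumes "M \<in> carrier_mat n n" and "X \<in> carrier_mat n n"
  shows "minner M X = (\<Sum>i<n. \<Sum>k<n. M $$ (k, i) * X $$ (k, i))"
  unfolding minner_def mtrace_def using assms by (simp add: scalar_prod_def atLeast0LessThan mult.commute)

lemma minner_eq_trace_prod: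
  assumes "M \<in> carrier_mat n n" and "X \<in> carrier_mat n n" and sym: "sym_form n (entries X)"
  shows "minner M X = trace_prod n (entries M) (entries X)"
proof -
  have "minner M X = (\<Sum>k<n. \<Sum>i<n. M $$ (k, i) * X $$ (k, i))"
    unfolding minner_eq_sum[OF assms(1,2)] by (rule sum.swap)
  also have "\<dots> = trace_prod n (entries M) (entries X)"
    using sym unfolding trace_prod_def sym_form_def entries_def by (intro sum.cong refl) auto
  finally show ?thesis .
qed

lemma trace_prod_shift_diag:
  "trace_prod n (\<lambda>i k. P i k - \<mu> * of_bool (i = k)) X = trace_prod n P X - \<mu> * (\<Sum>i<n. X i i)"
  unfolding trace_prod_def
  by (simp add: left_diff_distrib sum_subtractf mult.assoc flip: sum_distrib_left)

lemma lambda_min_mtrace_le_minner: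
  assumes M: "M \<in> carrier_mat n n" "0 < n" "sym_form n (entries M)"
    and X: "X \<in> carrier_mat n n" "sym_form n (entries X)" "psd_mat X"
  shows "lambda_min M * mtrace X \<le> minner M X"
proof -
  obtain f0 where "\<And>f. lambda_min M * sq_norm n f \<le> bilin_form n (entries M) f f"
    using lambda_min_rayleigh[OF M] by blast
  then have "psd_form n (\<lambda>i k. entries M i k - lambda_min M * of_bool (i = k))"
    unfolding psd_form_def bilin_form_shift_diag by (simp add: sq_norm_def power2_eq_square)
  then have "0 \<le> trace_prod n (\<lambda>i k. entries M i k - lambda_min M * of_bool (i = k)) (entries X)"
    using trace_prod_psd_nonneg X(2) psd_mat_imp_psd_form[OF X(1,3)] by blast
  then show ?thesis
    using X(1) unfolding trace_prod_shift_diag minner_eq_trace_prod[OF M(1) X(1,2)] mtrace_def entries_def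
    by simp
qed

lemma lambda_min_nonneg:
  assumes "M \<in> carrier_mat n n" and "0 < n" and "sym_form n (entries M)" and "psd_mat M"
  shows "0 \<le> lambda_min M"
proof -
  obtain f0 where "lambda_min M = bilin_form n (entries M) f0 f0"
    using lambda_min_rayleigh[OF assms(1-3)] by blast
  then show ?thesis
    using psd_mat_imp_psd_form[OF assms(1,4)] unfolding psd_form_def by simp
qed

lemma bdsym_carrier_sym:
  assumes "X \<in> bdsym bs"
  shows "X \<in> carrier_mat (sum_list bs) (sum_list bs)" and "sym_form (sum_list bs) (entries X)"
proof -
  show X: "X \<in> carrier_mat (sum_list bs) (sum_list bs)"
    using assms unfolding bdsym_def by simp
  have "transpose_mat X = X"
    using assms unfolding bdsym_def by simp
  then have "X $$ (i, k) = X $$ (k, i)" if "i < sum_list bs" "k < sum_list bs" for i k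
    using index_transpose_mat(1)[of i X k] that X by simp
  then show "sym_form (sum_list bs) (entries X)"
    unfolding sym_form_def entries_def by blast
qed

lemma bdsym_lambda_min_mtrace_le_minner:
  assumes "0 < sum_list bs" and M: "M \<in> bdsym bs" and "X \<in> bdpsd bs"
  shows "lambda_min M * mtrace X \<le> minner M X"
proof -
  have X: "X \<in> bdsym bs" "psd_mat X"
    using \<open>X \<in> bdpsd bs\<close> unfolding bdpsd_def by auto
  show ?thesis
    by (rule lambda_min_mtrace_le_minner[OF bdsym_carrier_sym(1)[OF M] \<open>0 < sum_list bs\<close>
          bdsym_carrier_sym(2)[OF M] bdsym_carrier_sym[OF X(1)] X(2)])
qed

lemma bdpsd_lambda_min_nonneg:
  assumes "0 < sum_list bs" and "M \<in> bdpsd bs"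
  shows "0 \<le> lambda_min M"
proof -
  have M: "M \<in> bdsym bs" "psd_mat M"
    using \<open>M \<in> bdpsd bs\<close> unfolding bdpsd_def by auto
  show ?thesis
    by (rule lambda_min_nonneg[OF bdsym_carrier_sym(1)[OF M(1)] \<open>0 < sum_list bs\<close>
          bdsym_carrier_sym(2)[OF M(1)] M(2)])
qed

lemma adjA_carrier: "adjA \<zeta> n Aj z \<in> carrier_mat n n"
  unfolding adjA_def by simp

lemma index_slack:
  assumes "C \<in> carrier_mat n n" and "r < n" and "c < n"
  shows "(C - adjA \<zeta> n Aj z) $$ (r, c) = C $$ (r, c) - (\<Sum>i<\<zeta>. z $ i * Aj i $$ (r, c))"
  using assms unfolding adjA_def by simp

lemma slack_bdsym:
  assumes C: "C \<in> bdsym bs" and Aj: "\<And>i. i < \<zeta> \<Longrightarrow> Aj i \<in> bdsym bs"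
  shows "C - adjA \<zeta> (sum_list bs) Aj y \<in> bdsym bs"
proof -
  let ?n = "sum_list bs"
  note slack = index_slack[OF bdsym_carrier_sym(1)[OF C]]
  have carrier: "C - adjA \<zeta> ?n Aj y \<in> carrier_mat ?n ?n"
    by (rule minus_carrier_mat[OF adjA_carrier])
  have "transpose_mat (C - adjA \<zeta> ?n Aj y) = C - adjA \<zeta> ?n Aj y"
  proof (rule eq_matI)
    fix r c
    assume "r < dim_row (C - adjA \<zeta> ?n Aj y)" and "c < dim_col (C - adjA \<zeta> ?n Aj y)"
    then have "r < ?n" and "c < ?n" using carrier by auto
    then show "transpose_mat (C - adjA \<zeta> ?n Aj y) $$ (r, c) = (C - adjA \<zeta> ?n Aj y) $$ (r, c)"
      using carrier_matD[OF carrier] bdsym_carrier_sym(2)[OF C] bdsym_carrier_sym(2)[OF Aj]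
      unfolding sym_form_def entries_def by (simp add: adjA_def)
  qed (simp_all add: adjA_def)
  moreover have "(C - adjA \<zeta> ?n Aj y) $$ (r, c) = 0" if "r < ?n" "c < ?n" "\<not> same_block bs r c" for r c
    using that C Aj unfolding slack[OF that(1,2)] bdsym_def by simp
  ultimately show ?thesis
    using carrier unfolding bdsym_def by blast
qed

lemma minner_slack:
  assumes C: "C \<in> carrier_mat n n" and Aj: "\<And>i. i < \<zeta> \<Longrightarrow> Aj i \<in> carrier_mat n n"
    and X: "X \<in> carrier_mat n n"
  shows "minner (C - adjA \<zeta> n Aj y) X = minner C X - (\<Sum>l<\<zeta>. y $ l * minner (Aj l) X)"
proof -
  have "minner (C - adjA \<zeta> n Aj y) X
      = (\<Sum>i<n. \<Sum>k<n. (C $$ (k, i) - (\<Sum>l<\<zeta>. y $ l * Aj l $$ (k, i))) * X $$ (k, i))"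
    unfolding minner_eq_sum[OF minus_carrier_mat[OF adjA_carrier] X]
    by (intro sum.cong refl) (simp add: index_slack[OF C])
  also have "\<dots> = minner C X - (\<Sum>i<n. \<Sum>k<n. \<Sum>l<\<zeta>. y $ l * (Aj l $$ (k, i) * X $$ (k, i)))"
    using C X by (simp add: minner_eq_sum left_diff_distrib sum_subtractf sum_distrib_right mult.assoc)
  also have "(\<Sum>i<n. \<Sum>k<n. \<Sum>l<\<zeta>. y $ l * (Aj l $$ (k, i) * X $$ (k, i)))
      = (\<Sum>i<n. \<Sum>l<\<zeta>. \<Sum>k<n. y $ l * (Aj l $$ (k, i) * X $$ (k, i)))"
    by (intro sum.cong refl sum.swap)
  also have "\<dots> = (\<Sum>l<\<zeta>. \<Sum>i<n. \<Sum>k<n. y $ l * (Aj l $$ (k, i) * X $$ (k, i)))"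
    by (rule sum.swap)
  also have "\<dots> = (\<Sum>l<\<zeta>. y $ l * minner (Aj l) X)"
    by (intro sum.cong refl) (simp add: minner_eq_sum[OF Aj X] sum_distrib_left)
  finally show ?thesis .
qed

lemma eigenvalue_bound_le_primal_objective:
  assumes n_pos: "\<forall>j<p. 0 < sum_list (bs j)"
    and C_in: "\<forall>j<p. C j \<in> bdsym (bs j)" and A_in: "\<forall>i<\<zeta>. \<forall>j<p. A i j \<in> bdsym (bs j)"
    and X_psd: "\<forall>j<p. X j \<in> bdpsd (bs j)"
    and feasible: "\<forall>i<\<zeta>. (\<Sum>j<p. minner (A i j) (X j)) = b $ i"
    and trace: "\<forall>j<p. mtrace (X j) = a j"
    and y: "y \<in> carrier_vec \<zeta>"
  shows "b \<bullet> y + (\<Sum>j<p. a j * lambda_min (C j - adjA \<zeta> (sum_list (bs j)) (\<lambda>i. A i j) y))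
      \<le> (\<Sum>j<p. minner (C j) (X j))"
proof -
  let ?S = "\<lambda>j. C j - adjA \<zeta> (sum_list (bs j)) (\<lambda>i. A i j) y"
  have block: "a j * lambda_min (?S j) \<le> minner (C j) (X j) - (\<Sum>l<\<zeta>. y $ l * minner (A l j) (X j))"
    if "j < p" for j
  proof -
    have X: "X j \<in> bdsym (bs j)" using X_psd \<open>j < p\<close> unfolding bdpsd_def by blast
    have "?S j \<in> bdsym (bs j)"
      using C_in A_in \<open>j < p\<close> by (intro slack_bdsym) auto
    then have "lambda_min (?S j) * mtrace (X j) \<le> minner (?S j) (X j)"
      using n_pos X_psd \<open>j < p\<close> by (intro bdsym_lambda_min_mtrace_le_minner) auto
    then have "a j * lambda_min (?S j) \<le> minner (?S j) (X j)"
      using trace \<open>j < p\<close> by (simp add: mult.commute)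
    also have "\<dots> = minner (C j) (X j) - (\<Sum>l<\<zeta>. y $ l * minner (A l j) (X j))"
      using bdsym_carrier_sym(1) C_in A_in X \<open>j < p\<close> by (intro minner_slack) auto
    finally show ?thesis .
  qed
  have "(\<Sum>j<p. \<Sum>l<\<zeta>. y $ l * minner (A l j) (X j)) = (\<Sum>l<\<zeta>. y $ l * (\<Sum>j<p. minner (A l j) (X j)))"
    by (subst sum.swap) (simp add: sum_distrib_left)
  also have "\<dots> = b \<bullet> y"
    using feasible y by (simp add: scalar_prod_def atLeast0LessThan mult.commute)
  finally have "(\<Sum>j<p. minner (C j) (X j)) - b \<bullet> y
      = (\<Sum>j<p. minner (C j) (X j) - (\<Sum>l<\<zeta>. y $ l * minner (A l j) (X j)))"
    by (simp add: sum_subtractf)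
  moreover have "(\<Sum>j<p. a j * lambda_min (?S j))
      \<le> (\<Sum>j<p. minner (C j) (X j) - (\<Sum>l<\<zeta>. y $ l * minner (A l j) (X j)))"
    using block by (intro sum_mono) simp
  ultimately show ?thesis by simp
qed

lemma dual_objective_le_eigenvalue_bound:
  assumes n_pos: "\<forall>j<p. 0 < sum_list (bs j)" and a_pos: "\<forall>j<p. 0 < a j"
    and slack_psd: "\<forall>j<p. C j - adjA \<zeta> (sum_list (bs j)) (\<lambda>i. A i j) y \<in> bdpsd (bs j)"
  shows "b \<bullet> y \<le> b \<bullet> y + (\<Sum>j<p. a j * lambda_min (C j - adjA \<zeta> (sum_list (bs j)) (\<lambda>i. A i j) y))"
proof -
  have "0 \<le> a j * lambda_min (C j - adjA \<zeta> (sum_list (bs j)) (\<lambda>i. A i j) y)" if "j < p" for j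
  proof -
    have "0 \<le> lambda_min (C j - adjA \<zeta> (sum_list (bs j)) (\<lambda>i. A i j) y)"
      using n_pos slack_psd \<open>j < p\<close> by (intro bdpsd_lambda_min_nonneg) auto
    then show ?thesis using a_pos \<open>j < p\<close> by (auto intro!: mult_nonneg_nonneg)
  qed
  then have "0 \<le> (\<Sum>j<p. a j * lambda_min (C j - adjA \<zeta> (sum_list (bs j)) (\<lambda>i. A i j) y))"
    by (intro sum_nonneg) simp
  then show ?thesis by simp
qed

lemma SUP_eq_INF_of_sandwich:
  fixes g h :: "'a \<Rightarrow> 'b::complete_lattice" and f :: "'c \<Rightarrow> 'b"
  assumes "D \<subseteq> Y" and "\<And>y. y \<in> D \<Longrightarrow> g y \<le> h y" and "\<And>y x. y \<in> Y \<Longrightarrow> x \<in> X \<Longrightarrow> h y \<le> f x"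
    and "(SUP y\<in>D. g y) = (INF x\<in>X. f x)"
  shows "(SUP y\<in>Y. h y) = (INF x\<in>X. f x)"
proof (rule antisym)
  show "(SUP y\<in>Y. h y) \<le> (INF x\<in>X. f x)"
    using assms(3) by (intro SUP_least INF_greatest)
  have "(SUP y\<in>D. g y) \<le> (SUP y\<in>Y. h y)"
    using assms(1,2) by (intro SUP_mono) blast
  then show "(INF x\<in>X. f x) \<le> (SUP y\<in>Y. h y)"
    using assms(4) by simp
qed

lemma SUP_attained_of_sandwich:
  fixes g h :: "'a \<Rightarrow> 'b::complete_lattice" and f :: "'c \<Rightarrow> 'b"
  assumes "D \<subseteq> Y" and "\<And>y. y \<in> D \<Longrightarrow> g y \<le> h y" and "\<And>y x. y \<in> Y \<Longrightarrow> x \<in> X \<Longrightarrow> h y \<le> f x"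
    and "(SUP y\<in>D. g y) = (INF x\<in>X. f x)"
    and "y \<in> D" and "g y = (SUP y\<in>D. g y)"
  shows "h y = (SUP y\<in>Y. h y)"
proof (rule antisym)
  show "h y \<le> (SUP y\<in>Y. h y)"
    using assms(1,5) by (auto intro: SUP_upper)
  have "(SUP y\<in>Y. h y) = g y"
    using SUP_eq_INF_of_sandwich[OF assms(1-4)] assms(4,6) by simp
  then show "(SUP y\<in>Y. h y) \<le> h y"
    using assms(2,5) by simp
qed

theorem lemma5:
  fixes p \<zeta> :: nat
    and bs :: "nat \<Rightarrow> nat list"
    and C :: "nat \<Rightarrow> real mat"
    and A :: "nat \<Rightarrow> nat \<Rightarrow> real mat"
    and b :: "real vec"
    and a :: "nat \<Rightarrow> real"
  assumes blocks: "\<forall>j<p. bs j \<noteq> [] \<and> (\<forall>s\<in>set (bs j). 1 \<le> s)"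
    and b_dim: "b \<in> carrier_vec \<zeta>"
    and C_in: "\<forall>j<p. C j \<in> bdsym (bs j)"
    and A_in: "\<forall>i<\<zeta>. \<forall>j<p. A i j \<in> bdsym (bs j)"
    and strong_duality:
      "(SUP y\<in>{y \<in> carrier_vec \<zeta>. \<forall>j<p. C j - adjA \<zeta> (sum_list (bs j)) (\<lambda>i. A i j) y \<in> bdpsd (bs j)}.
          ereal (b \<bullet> y))
       = (INF X\<in>{X. (\<forall>j<p. X j \<in> bdpsd (bs j)) \<and> (\<forall>i<\<zeta>. (\<Sum>j<p. minner (A i j) (X j)) = b $ i)}.
          ereal (\<Sum>j<p. minner (C j) (X j)))"
    and tau_finite:
      "\<bar>INF X\<in>{X. (\<forall>j<p. X j \<in> bdpsd (bs j)) \<and> (\<forall>i<\<zeta>. (\<Sum>j<p. minner (A i j) (X j)) = b $ i)}.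
          ereal (\<Sum>j<p. minner (C j) (X j))\<bar> \<noteq> \<infinity>"
    and a_pos: "\<forall>j<p. a j > 0"
    and const_trace:
      "\<forall>X. (\<forall>j<p. X j \<in> bdsym (bs j)) \<and> (\<forall>i<\<zeta>. (\<Sum>j<p. minner (A i j) (X j)) = b $ i)
           \<longrightarrow> (\<forall>j<p. mtrace (X j) = a j)"
  shows "(SUP y\<in>carrier_vec \<zeta>.
            ereal (b \<bullet> y + (\<Sum>j<p. a j * lambda_min (C j - adjA \<zeta> (sum_list (bs j)) (\<lambda>i. A i j) y))))
         = (INF X\<in>{X. (\<forall>j<p. X j \<in> bdpsd (bs j)) \<and> (\<forall>i<\<zeta>. (\<Sum>j<p. minner (A i j) (X j)) = b $ i)}.
              ereal (\<Sum>j<p. minner (C j) (X j)))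
       \<and> ((\<exists>y\<in>carrier_vec \<zeta>. (\<forall>j<p. C j - adjA \<zeta> (sum_list (bs j)) (\<lambda>i. A i j) y \<in> bdpsd (bs j))
             \<and> ereal (b \<bullet> y) = (SUP y\<in>{y \<in> carrier_vec \<zeta>. \<forall>j<p. C j - adjA \<zeta> (sum_list (bs j)) (\<lambda>i. A i j) y \<in> bdpsd (bs j)}.
                 ereal (b \<bullet> y)))
          \<longrightarrow> (\<exists>y\<in>carrier_vec \<zeta>.
                 ereal (b \<bullet> y + (\<Sum>j<p. a j * lambda_min (C j - adjA \<zeta> (sum_list (bs j)) (\<lambda>i. A i j) y)))
                 = (SUP y\<in>carrier_vec \<zeta>.
                      ereal (b \<bullet> y + (\<Sum>j<p. a j * lambda_min (C j - adjA \<zeta> (sum_list (bs j)) (\<lambda>i. A i j) y))))))"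
proof -
  let ?F = "{X. (\<forall>j<p. X j \<in> bdpsd (bs j)) \<and> (\<forall>i<\<zeta>. (\<Sum>j<p. minner (A i j) (X j)) = b $ i)}"
  let ?D = "{y \<in> carrier_vec \<zeta>. \<forall>j<p. C j - adjA \<zeta> (sum_list (bs j)) (\<lambda>i. A i j) y \<in> bdpsd (bs j)}"
  let ?\<psi> = "\<lambda>y. b \<bullet> y + (\<Sum>j<p. a j * lambda_min (C j - adjA \<zeta> (sum_list (bs j)) (\<lambda>i. A i j) y))"
  have n_pos: "\<forall>j<p. 0 < sum_list (bs j)"
    using blocks by (auto simp: neq_Nil_conv)
  have dual_feasible: "?D \<subseteq> carrier_vec \<zeta>" by blast
  have dual_bound: "ereal (b \<bullet> y) \<le> ereal (?\<psi> y)" if "y \<in> ?D" for y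
    using dual_objective_le_eigenvalue_bound[OF n_pos a_pos] that by simp
  have primal_bound: "ereal (?\<psi> y) \<le> ereal (\<Sum>j<p. minner (C j) (X j))"
    if "y \<in> carrier_vec \<zeta>" and "X \<in> ?F" for y X
    using eigenvalue_bound_le_primal_objective[OF n_pos C_in A_in _ _ _ that(1)] that(2) const_trace
    unfolding bdpsd_def by auto
  \<comment> \<open>The sandwich argument takes place in ereal.\<close>
  note sandwich = dual_feasible dual_bound primal_bound strong_duality
  show ?thesis
    using SUP_eq_INF_of_sandwich[OF sandwich] SUP_attained_of_sandwich[OF sandwich] by blast
qed

end
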